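(* Let $\Gamma$ be an abelian group containing no element of order two. Let $M_1,M_2$ be matroids on a common ground set $E$, $\psi\colon E\to\Gamma$ a labeling, and $B_0$ a common basis of $M_1,M_2$ with $\psi(B_0)=0$. Then $M_1$ and $M_2$ have a common basis $B^*$ with $\psi(B^* )\neq0$ if and only if $D_{M_1,M_2}(B_0)$ contains a directed cycle $C$ with $\psi'(C)\ne 0$.
   Context: $\psi(S):=\sum_{x\in S}\psi(x)$. For a common basis $B$ of $M_1,M_2$, the digraph $D_{M_1,M_2}(B)$ has vertex set $E$ and arcs: for each $x\in B$, $y\in E\setminus B$ with $B-x+y$ a basis of $M_1$, an arc $xy$ with label $\psi'(xy):=\psi(y)$; and for each $x\in B$, $y\in E\setminus B$ with $B-x+y$ a basis of $M_2$, an arc $yx$ with label $\psi'(yx):=-\psi(x)$. The label $\psi'(C)$ of a directed cycle is the sum of the labels of its arcs. *)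

theory Defs
  imports Main
begin

definition matroid :: "'a set \<Rightarrow> 'a set set \<Rightarrow> bool" where
  "matroid E \<B> \<longleftrightarrow> finite E \<and> \<B> \<noteq> {} \<and> (\<forall>B\<in>\<B>. B \<subseteq> E) \<and>
     (\<forall>B1\<in>\<B>. \<forall>B2\<in>\<B>. \<forall>x\<in>B1 - B2. \<exists>y\<in>B2 - B1. insert y (B1 - {x}) \<in> \<B>)"

definition exch_arcs :: "'a set \<Rightarrow> 'a set set \<Rightarrow> 'a set set \<Rightarrow> 'a set \<Rightarrow> ('a \<times> 'a) set" where
  "exch_arcs E M1 M2 B =
     {(x, y). x \<in> B \<and> y \<in> E - B \<and> insert y (B - {x}) \<in> M1} \<union>
     {(y, x). x \<in> B \<and> y \<in> E - B \<and> insert y (B - {x}) \<in> M2}"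

definition arc_label :: "('a \<Rightarrow> 'g::ab_group_add) \<Rightarrow> 'a set \<Rightarrow> 'a \<times> 'a \<Rightarrow> 'g" where
  "arc_label \<psi> B a = (if fst a \<in> B then \<psi> (snd a) else - \<psi> (snd a))"

definition directed_cycle :: "('a \<times> 'a) set \<Rightarrow> 'a list \<Rightarrow> bool" where
  "directed_cycle A cs \<longleftrightarrow> cs \<noteq> [] \<and> distinct cs \<and>
     (\<forall>i < length cs. (cs ! i, cs ! ((i + 1) mod length cs)) \<in> A)"

definition cycle_label :: "('a \<times> 'a \<Rightarrow> 'g::ab_group_add) \<Rightarrow> 'a list \<Rightarrow> 'g" where
  "cycle_label lab cs = (\<Sum>i < length cs. lab (cs ! i, cs ! ((i + 1) mod length cs)))"

end

theory Submission
  imports Defs "HOL-Library.Multiset"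
begin

text \<open>
  Forward: for a common basis B, the exchange bijections of M1 and M2 between B0 - B and B - B0
  combine into a permutation of the symmetric difference along arcs of D(B0). Its arc multiset is
  balanced, hence a sum of cycles, and its weight is \<psi>(B) - \<psi>(B0) \<noteq> 0; so some cycle has
  nonzero label.

  Backward: let C be a shortest cycle of nonzero label, with vertex set V. Its arcs match V \<inter> B0
  with V - B0 by single M1-exchanges and by single M2-exchanges. If one of these matchings were not
  the only one, rerouting C along another one and adding C gives 2|V| arcs from which a shortcut
  cycle of label 0 splits off; the rest, too short to contain two cycles through all of V, has
  label 0 or \<psi>'(C). Thus 2\<psi>'(C) \<in> {0, \<psi>'(C)}, impossible without elements of order two. By
  Krogdahl's unique-matching lemma, the symmetric difference of B0 and V is then a common basis;
  its weight is \<psi>'(C).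
\<close>

section \<open>Finite sets and self-maps\<close>

lemma card_insert_Diff_singleton:
  assumes "finite B" "x \<in> B" "y \<notin> B"
  shows "card (insert y (B - {x})) = card B"
proof -
  have "card B > 0" using assms card_gt_0_iff by blast
  then show ?thesis using assms by simp
qed

lemma eq_insert_Diff_if_card_eq:
  assumes "finite B" "card B' = card B" "y \<in> B'" "y \<notin> B" "B' \<subseteq> insert y B"
  obtains x where "x \<in> B" "x \<notin> B'" "B' = insert y (B - {x})"
proof -
  have "finite B'" using assms(1,5) finite_subset by blast
  have "\<not> B \<subseteq> B'"
  proof
    assume "B \<subseteq> B'"
    then have "card (insert y B) \<le> card B'" using \<open>finite B'\<close> assms(3) by (intro card_mono) auto
    then show False using assms(1,2,4) by simp
  qed
  then obtain x where x: "x \<in> B" "x \<notin> B'" by blast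
  have "B' \<subseteq> insert y (B - {x})" using x assms(5) by auto
  moreover have "card (insert y (B - {x})) = card B'"
    using card_insert_Diff_singleton[OF assms(1) x(1) assms(4)] assms(2) by simp
  ultimately have "B' = insert y (B - {x})" using assms(1) by (intro card_subset_eq) auto
  with x show thesis by (rule that)
qed

text \<open>A nonempty invariant subset of least cardinality is mapped onto itself.\<close>
lemma finite_self_map_bij_subset:
  assumes "finite X" "X \<noteq> {}" "g ` X \<subseteq> X"
  obtains W where "W \<subseteq> X" "W \<noteq> {}" "bij_betw g W W"
proof -
  let ?inv = "\<lambda>W. W \<subseteq> X \<and> W \<noteq> {} \<and> g ` W \<subseteq> W"
  have "?inv X" using assms by blast
  then obtain W where W: "W \<subseteq> X" "W \<noteq> {}" "g ` W \<subseteq> W" and least: "\<forall>V. ?inv V \<longrightarrow> card W \<le> card V"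
    using ex_has_least_nat[of ?inv X card] by blast
  have "finite W" using W(1) assms(1) by (rule finite_subset)
  have "?inv (g ` W)" using W by auto
  then have "card W \<le> card (g ` W)" using least by blast
  then have "g ` W = W" using card_seteq[OF \<open>finite W\<close> W(3)] by blast
  then have "bij_betw g W W" using \<open>finite W\<close> by (simp add: bij_betw_def eq_card_imp_inj_on)
  then show thesis using that W(1,2) by blast
qed

lemma bij_betw_reroute:
  assumes "bij_betw s V V" "W \<subseteq> V" "bij_betw h W W"
  shows "bij_betw (\<lambda>v. if v \<in> W then s (h v) else s v) V V"
proof -
  let ?f = "\<lambda>v. if v \<in> W then s (h v) else s v"
  have "bij_betw (s \<circ> h) W (s ` W)"
    using assms(3) bij_betw_subset[OF assms(1,2) refl] by (rule bij_betw_trans)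
  then have "bij_betw ?f W (s ` W)" by (rule bij_betw_cong[THEN iffD1, rotated]) simp
  moreover have "bij_betw ?f (V - W) (s ` (V - W))"
    using bij_betw_subset[OF assms(1) Diff_subset refl]
    by (rule bij_betw_cong[THEN iffD1, rotated]) simp
  moreover have "s ` W \<inter> s ` (V - W) = {}"
    using bij_betw_imp_inj_on[OF assms(1)] assms(2) by (auto dest: inj_onD)
  ultimately have "bij_betw ?f (W \<union> (V - W)) (s ` W \<union> s ` (V - W))"
    by (rule bij_betw_combine)
  moreover have "W \<union> (V - W) = V" using assms(2) by (rule Diff_partition)
  moreover have "s ` W \<union> s ` (V - W) = V"
    unfolding image_Un[symmetric] \<open>W \<union> (V - W) = V\<close> using assms(1) by (simp add: bij_betw_def)
  ultimately show ?thesis by simp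
qed

section \<open>Bases of a matroid\<close>

locale matroid_bases =
  fixes E :: "'a set" and \<B> :: "'a set set"
  assumes matroid: "matroid E \<B>"
begin

lemma basis_subset: "B \<in> \<B> \<Longrightarrow> B \<subseteq> E"
  using matroid unfolding matroid_def by blast

lemma finite_basis: "B \<in> \<B> \<Longrightarrow> finite B"
  using matroid basis_subset rev_finite_subset unfolding matroid_def by metis

lemma basis_exchange:
  "B1 \<in> \<B> \<Longrightarrow> B2 \<in> \<B> \<Longrightarrow> x \<in> B1 - B2 \<Longrightarrow> \<exists>y\<in>B2 - B1. insert y (B1 - {x}) \<in> \<B>"
  using matroid unfolding matroid_def by blast

lemma card_bases_eq:
  assumes "B1 \<in> \<B>" "B2 \<in> \<B>"
  shows "card B1 = card B2"
  using assms
proof (induction "card (B1 - B2)" arbitrary: B1 rule: less_induct)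
  case less
  show ?case
  proof (cases "B1 - B2 = {}")
    case True
    have "B2 - B1 = {}" using basis_exchange[OF less.prems(2,1)] True by blast
    with True show ?thesis by (metis Diff_eq_empty_iff subset_antisym)
  next
    case False
    then obtain x where x: "x \<in> B1 - B2" by blast
    then obtain y where y: "y \<in> B2 - B1" "insert y (B1 - {x}) \<in> \<B>"
      using basis_exchange[OF less.prems] by blast
    have "insert y (B1 - {x}) - B2 \<subset> B1 - B2" using x y by auto
    then have "card (insert y (B1 - {x}) - B2) < card (B1 - B2)"
      using finite_basis[OF less.prems(1)] by (simp add: psubset_card_mono)
    then have "card (insert y (B1 - {x})) = card B2" using less.hyps y(2) less.prems(2) by blast
    then show ?thesis
      using x y finite_basis[OF less.prems(1)] card_insert_Diff_singleton by fastforce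
  qed
qed

lemma basis_extension:
  assumes "B \<in> \<B>" "B1 \<in> \<B>" "I \<subseteq> B1"
  shows "\<exists>B'\<in>\<B>. I \<subseteq> B' \<and> B' \<subseteq> I \<union> B"
  using assms(2,3)
proof (induction "card (B1 - (I \<union> B))" arbitrary: B1 rule: less_induct)
  case less
  show ?case
  proof (cases "B1 - (I \<union> B) = {}")
    case True
    then show ?thesis using less.prems by blast
  next
    case False
    then obtain z where z: "z \<in> B1 - (I \<union> B)" by blast
    then obtain u where u: "u \<in> B - B1" "insert u (B1 - {z}) \<in> \<B>"
      using basis_exchange[OF less.prems(1) assms(1)] by blast
    have "insert u (B1 - {z}) - (I \<union> B) \<subset> B1 - (I \<union> B)" using z u by auto
    then have "card (insert u (B1 - {z}) - (I \<union> B)) < card (B1 - (I \<union> B))"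
      using finite_basis[OF less.prems(1)] by (simp add: psubset_card_mono)
    moreover have "I \<subseteq> insert u (B1 - {z})" using z less.prems(2) by auto
    ultimately show ?thesis using less.hyps u(2) by blast
  qed
qed

text \<open>For y outside B, this is the unique circuit contained in insert y B.\<close>
definition fund_circuit :: "'a set \<Rightarrow> 'a \<Rightarrow> 'a set" where
  "fund_circuit B y = insert y {x \<in> B. insert y (B - {x}) \<in> \<B>}"

lemma fund_circuit_not_in_basis:
  assumes "B \<in> \<B>" "y \<notin> B" "B' \<in> \<B>"
  shows "\<not> fund_circuit B y \<subseteq> B'"
proof
  assume "fund_circuit B y \<subseteq> B'"
  then obtain B'' where B'': "B'' \<in> \<B>" "fund_circuit B y \<subseteq> B''" "B'' \<subseteq> fund_circuit B y \<union> B"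
    using basis_extension[OF assms(1,3)] by blast
  have "B'' \<subseteq> insert y B" "y \<in> B''" using B''(2,3) unfolding fund_circuit_def by auto
  then obtain x where "x \<in> B" "x \<notin> B''" "B'' = insert y (B - {x})"
    using eq_insert_Diff_if_card_eq[OF finite_basis[OF assms(1)] card_bases_eq[OF B''(1) assms(1)]]
      assms(2) by blast
  then show False using B'' unfolding fund_circuit_def by auto
qed

lemma fund_circuit_subset_dependent:
  assumes "B \<in> \<B>" "S \<subseteq> insert y B" "\<forall>B'\<in>\<B>. \<not> S \<subseteq> B'"
  shows "fund_circuit B y \<subseteq> S"
proof
  fix x assume x: "x \<in> fund_circuit B y"
  show "x \<in> S"
  proof (rule ccontr)
    assume "x \<notin> S"
    then have "S \<subseteq> B \<or> (insert y (B - {x}) \<in> \<B> \<and> S \<subseteq> insert y (B - {x}))"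
      using x assms(2) unfolding fund_circuit_def by auto
    then show False using assms(1,3) by blast
  qed
qed

lemma fund_circuit_eq:
  assumes "B \<in> \<B>" "B' \<in> \<B>" "y \<notin> B" "y \<notin> B'" "fund_circuit B y \<subseteq> insert y B'"
  shows "fund_circuit B' y = fund_circuit B y"
proof
  show "fund_circuit B' y \<subseteq> fund_circuit B y"
    using fund_circuit_subset_dependent[OF assms(2,5)] fund_circuit_not_in_basis[OF assms(1,3)]
    by blast
  then have "fund_circuit B' y \<subseteq> insert y B" unfolding fund_circuit_def by auto
  then show "fund_circuit B y \<subseteq> fund_circuit B' y"
    using fund_circuit_subset_dependent[OF assms(1)] fund_circuit_not_in_basis[OF assms(2,4)]
    by blast
qed

text \<open>If x1 is no exchange partner of y, the exchange of x1 for y1 leaves the fundamental circuit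
  of y, hence the exchanges available to y, unchanged.\<close>
lemma exchange_after_exchange_iff:
  assumes "B \<in> \<B>" "x1 \<in> B" "y1 \<notin> B" "insert y1 (B - {x1}) \<in> \<B>"
    and "y \<notin> B" "y \<noteq> y1" "insert y (B - {x1}) \<notin> \<B>" and "z \<in> B" "z \<noteq> x1"
  shows "insert y (insert y1 (B - {x1}) - {z}) \<in> \<B> \<longleftrightarrow> insert y (B - {z}) \<in> \<B>"
proof -
  let ?B1 = "insert y1 (B - {x1})"
  have "fund_circuit B y \<subseteq> insert y ?B1" using assms(7) unfolding fund_circuit_def by auto
  then have "fund_circuit ?B1 y = fund_circuit B y" using assms by (intro fund_circuit_eq) auto
  then have "z \<in> fund_circuit ?B1 y \<longleftrightarrow> z \<in> fund_circuit B y" by simp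
  then show ?thesis using assms(3,5,8,9) unfolding fund_circuit_def by auto
qed

lemma symmetric_exchange:
  assumes "B \<in> \<B>" "B' \<in> \<B>" "x \<in> B - B'"
  shows "\<exists>y\<in>B' - B. insert y (B - {x}) \<in> \<B> \<and> insert x (B' - {y}) \<in> \<B>"
proof -
  define Y where "Y = fund_circuit B' x - {x}"
  have "Y \<subseteq> B'" unfolding Y_def fund_circuit_def by auto
  then obtain B3 where B3: "B3 \<in> \<B>" "Y \<subseteq> B3" "B3 \<subseteq> Y \<union> B"
    using basis_extension[OF assms(1,2)] by blast
  have "x \<notin> B3"
  proof
    assume "x \<in> B3"
    then have "fund_circuit B' x \<subseteq> B3" using B3(2) unfolding Y_def by auto
    then show False using fund_circuit_not_in_basis[OF assms(2) _ B3(1)] assms(3) by blast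
  qed
  obtain B4 where B4: "B4 \<in> \<B>" "B - {x} \<subseteq> B4" "B4 \<subseteq> (B - {x}) \<union> B3"
    using basis_extension[OF B3(1) assms(1), of "B - {x}"] by blast
  have "card (B - {x}) < card B4"
    using card_Diff1_less[OF finite_basis[OF assms(1)], of x] card_bases_eq[OF B4(1) assms(1)]
      assms(3)
    by simp
  then have "B4 \<noteq> B - {x}" by auto
  then obtain y where y: "y \<in> B4" "y \<notin> B - {x}" using B4(2) by blast
  have "y \<in> Y" using y B4(3) B3(3) \<open>x \<notin> B3\<close> by blast
  then have "y \<noteq> x" "y \<notin> B" "y \<in> B'" using y \<open>Y \<subseteq> B'\<close> unfolding Y_def by auto
  have "insert y (B - {x}) = B4"
  proof (rule card_subset_eq[OF finite_basis[OF B4(1)]])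
    show "insert y (B - {x}) \<subseteq> B4" using y(1) B4(2) by blast
    show "card (insert y (B - {x})) = card B4"
      using card_insert_Diff_singleton[OF finite_basis[OF assms(1)]]
        card_bases_eq[OF B4(1) assms(1)]
        assms(3) \<open>y \<notin> B\<close> by simp
  qed
  moreover have "insert x (B' - {y}) \<in> \<B>"
    using \<open>y \<in> Y\<close> \<open>y \<noteq> x\<close> unfolding Y_def fund_circuit_def by auto
  ultimately show ?thesis using B4(1) \<open>y \<notin> B\<close> \<open>y \<in> B'\<close> by blast
qed

lemma exchange_bijection:
  assumes "B \<in> \<B>" "B' \<in> \<B>"
  shows "\<exists>\<sigma>. bij_betw \<sigma> (B - B') (B' - B) \<and> (\<forall>x\<in>B - B'. insert (\<sigma> x) (B - {x}) \<in> \<B>)"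
  using assms(2)
proof (induction "card (B - B')" arbitrary: B' rule: less_induct)
  case less
  show ?case
  proof (cases "B - B' = {}")
    case True
    then have "B = B'"
      using card_bases_eq[OF assms(1) less.prems] finite_basis[OF less.prems] card_subset_eq
      by blast
    then show ?thesis by (auto intro: exI[of _ id])
  next
    case False
    then obtain x where x: "x \<in> B - B'" by blast
    obtain y where y: "y \<in> B' - B" "insert y (B - {x}) \<in> \<B>" "insert x (B' - {y}) \<in> \<B>"
      using symmetric_exchange[OF assms(1) less.prems x] by blast
    let ?B1 = "insert x (B' - {y})"
    have "B - ?B1 = (B - B') - {x}" "?B1 - B = (B' - B) - {y}" using x y by auto
    moreover have "card ((B - B') - {x}) < card (B - B')"
      using x finite_basis[OF assms(1)] by (intro card_Diff1_less) auto
    ultimately obtain \<sigma> where \<sigma>: "bij_betw \<sigma> ((B - B') - {x}) ((B' - B) - {y})"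
      "\<forall>z\<in>(B - B') - {x}. insert (\<sigma> z) (B - {z}) \<in> \<B>"
      using less.hyps[OF _ y(3)] by auto
    have "bij_betw (\<sigma>(x := y)) ((B - B') - {x}) ((B' - B) - {y})"
      using \<sigma>(1) by (subst bij_betw_cong[where g = \<sigma>]) auto
    moreover have "bij_betw (\<sigma>(x := y)) {x} {y}" by (simp add: bij_betw_def)
    ultimately have "bij_betw (\<sigma>(x := y)) ((B - B') - {x} \<union> {x}) ((B' - B) - {y} \<union> {y})"
      by (rule bij_betw_combine) auto
    moreover have "(B - B') - {x} \<union> {x} = B - B'" "(B' - B) - {y} \<union> {y} = B' - B" using x y by auto
    moreover have "\<forall>z\<in>B - B'. insert ((\<sigma>(x := y)) z) (B - {z}) \<in> \<B>" using \<sigma>(2) y(2) by auto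
    ultimately show ?thesis by metis
  qed
qed

text \<open>Krogdahl's lemma: unless the single exchanges admit a second perfect matching \<sigma> \<circ> h
  between X and \<sigma> ` X, exchanging all of X at once yields a basis.\<close>
lemma multiple_exchange:
  assumes "B \<in> \<B>" "X \<subseteq> B" "inj_on \<sigma> X" "\<sigma> ` X \<inter> B = {}"
    and "\<forall>x\<in>X. insert (\<sigma> x) (B - {x}) \<in> \<B>"
  shows "B - X \<union> \<sigma> ` X \<in> \<B> \<or>
    (\<exists>W h. W \<subseteq> X \<and> W \<noteq> {} \<and> bij_betw h W W \<and> (\<forall>z\<in>W. h z \<noteq> z \<and> insert (\<sigma> (h z)) (B - {z}) \<in> \<B>))"
proof -
  have "finite X" using assms(1,2) finite_basis finite_subset by blast
  then show ?thesis using assms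
  proof (induction X arbitrary: B rule: finite_psubset_induct)
    case (psubset X)
    have \<sigma>B: "\<sigma> x \<notin> B" if "x \<in> X" for x using that psubset.prems(4) by blast
    consider "X = {}"
      | (unique) x1 where "x1 \<in> X" "\<forall>x\<in>X - {x1}. insert (\<sigma> x) (B - {x1}) \<notin> \<B>"
      | (alternative) "X \<noteq> {}" "\<forall>x\<in>X. \<exists>x'\<in>X - {x}. insert (\<sigma> x') (B - {x}) \<in> \<B>"
      by blast
    then show ?case
    proof cases
      case 1
      then show ?thesis using psubset.prems(1) by simp
    next
      case unique
      define B1 where "B1 = insert (\<sigma> x1) (B - {x1})"
      let ?X' = "X - {x1}"
      have "B1 \<in> \<B>" unfolding B1_def using unique(1) psubset.prems(5) by blast
      have \<sigma>_ne: "\<sigma> x \<noteq> \<sigma> x1" if "x \<in> ?X'" for x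
        using that unique(1) inj_onD[OF psubset.prems(3)] by blast
      have exch_iff: "insert (\<sigma> x) (B1 - {z}) \<in> \<B> \<longleftrightarrow> insert (\<sigma> x) (B - {z}) \<in> \<B>"
        if "x \<in> ?X'" "z \<in> B - {x1}" for x z
        unfolding B1_def using that unique psubset.prems(1,2,5) \<sigma>B \<sigma>_ne
        by (intro exchange_after_exchange_iff) auto
      have "B1 - ?X' \<union> \<sigma> ` ?X' \<in> \<B> \<or> (\<exists>W h. W \<subseteq> ?X' \<and> W \<noteq> {} \<and> bij_betw h W W \<and>
          (\<forall>z\<in>W. h z \<noteq> z \<and> insert (\<sigma> (h z)) (B1 - {z}) \<in> \<B>))"
      proof (rule psubset.IH)
        show "?X' \<subset> X" using unique(1) by blast
        show "B1 \<in> \<B>" by fact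
        show "?X' \<subseteq> B1" unfolding B1_def using psubset.prems(2) by blast
        show "inj_on \<sigma> ?X'" using psubset.prems(3) by (rule inj_on_subset) blast
        show "\<sigma> ` ?X' \<inter> B1 = {}" unfolding B1_def using \<sigma>B \<sigma>_ne by blast
        show "\<forall>x\<in>?X'. insert (\<sigma> x) (B1 - {x}) \<in> \<B>"
          using exch_iff psubset.prems(2,5) by blast
      qed
      moreover have "B1 - ?X' \<union> \<sigma> ` ?X' = B - X \<union> \<sigma> ` X"
        unfolding B1_def using unique(1) psubset.prems(2) \<sigma>B by auto
      moreover have "insert (\<sigma> (h z)) (B - {z}) \<in> \<B>"
        if "W \<subseteq> ?X'" "bij_betw h W W" "z \<in> W" "insert (\<sigma> (h z)) (B1 - {z}) \<in> \<B>" for W h z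
        using that exch_iff[of "h z" z] psubset.prems(2) bij_betwE by blast
      ultimately show ?thesis by (smt (verit) Diff_subset order_trans)
    next
      case alternative
      then obtain g where g: "\<forall>x\<in>X. g x \<in> X - {x} \<and> insert (\<sigma> (g x)) (B - {x}) \<in> \<B>"
        by metis
      then obtain W where "W \<subseteq> X" "W \<noteq> {}" "bij_betw g W W"
        using finite_self_map_bij_subset[OF psubset.hyps(1) alternative(1), of g] by blast
      then show ?thesis using g by blast
    qed
  qed
qed

end

section \<open>Cycles as lists of vertices\<close>

definition cycle_arcs :: "'a list \<Rightarrow> ('a \<times> 'a) list" where
  "cycle_arcs cs = zip cs (rotate1 cs)"

lemma length_cycle_arcs [simp]: "length (cycle_arcs cs) = length cs"
  unfolding cycle_arcs_def by simp

lemma nth_cycle_arcs: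
  "i < length cs \<Longrightarrow> cycle_arcs cs ! i = (cs ! i, cs ! ((i + 1) mod length cs))"
  unfolding cycle_arcs_def using nth_rotate[of i cs 1] by (simp add: add.commute)

lemma map_fst_cycle_arcs [simp]: "map fst (cycle_arcs cs) = cs"
  and map_snd_cycle_arcs [simp]: "map snd (cycle_arcs cs) = rotate1 cs"
  unfolding cycle_arcs_def by simp_all

lemma directed_cycle_iff:
  "directed_cycle A cs \<longleftrightarrow> cs \<noteq> [] \<and> distinct cs \<and> set (cycle_arcs cs) \<subseteq> A"
proof -
  have "set (cycle_arcs cs) \<subseteq> A \<longleftrightarrow> (\<forall>i < length cs. cycle_arcs cs ! i \<in> A)"
    by (auto simp: subset_eq all_set_conv_all_nth)
  then show ?thesis unfolding directed_cycle_def by (simp add: nth_cycle_arcs)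
qed

lemma cycle_label_eq_sum_list: "cycle_label lab cs = (\<Sum>a\<leftarrow>cycle_arcs cs. lab a)"
  unfolding cycle_label_def sum_list_sum_nth
  by (simp add: atLeast0LessThan nth_cycle_arcs)

lemma cycle_arcs_Cons:
  assumes "ys \<noteq> []"
  shows "cycle_arcs (x # ys) = (x, hd ys) # zip ys (tl ys) @ [(last ys, x)]"
proof -
  have "zip ys (tl ys @ [x]) = zip ys (tl ys) @ [(last ys, x)]"
    using assms by (induction ys rule: induct_list012) auto
  then show ?thesis using assms unfolding cycle_arcs_def by (cases ys) auto
qed

lemma set_cycle_arcs_rotate [simp]: "set (cycle_arcs (rotate n cs)) = set (cycle_arcs cs)"
proof -
  have rotate1_zip: "zip (rotate1 xs) (rotate1 ys) = rotate1 (zip xs ys)" if "length xs = length ys"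
    for xs ys :: "'a list"
    using that by (cases xs; cases ys) auto
  have "zip (rotate n xs) (rotate n ys) = rotate n (zip xs ys)" if "length xs = length ys"
    for xs ys :: "'a list"
    using that by (induction n) (simp_all add: rotate1_zip)
  then show ?thesis unfolding cycle_arcs_def by (simp add: rotate1_rotate_swap)
qed

lemma directed_cycle_mono: "directed_cycle A cs \<Longrightarrow> A \<subseteq> A' \<Longrightarrow> directed_cycle A' cs"
  unfolding directed_cycle_def by blast

lemma directed_cycle_rotate: "directed_cycle A (rotate n cs) \<longleftrightarrow> directed_cycle A cs"
  by (simp add: directed_cycle_iff)

lemma directed_cycle_converse:
  assumes "directed_cycle A cs"
  shows "directed_cycle (A\<inverse>) (rev (rotate1 cs))"
proof -
  have "rotate1 (rev (rotate1 cs)) = rev cs" by (cases cs) simp_all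
  then have "cycle_arcs (rev (rotate1 cs)) = rev (zip (rotate1 cs) cs)"
    unfolding cycle_arcs_def by (simp add: zip_rev)
  then have "set (cycle_arcs (rev (rotate1 cs))) = (set (cycle_arcs cs))\<inverse>"
    unfolding cycle_arcs_def by (auto simp: set_zip_rightD in_set_zip)
  then show ?thesis using assms by (auto simp: directed_cycle_iff)
qed

definition cycle_succ :: "'a list \<Rightarrow> 'a \<Rightarrow> 'a" where
  "cycle_succ cs v = the (map_of (cycle_arcs cs) v)"

lemma in_cycle_arcs_iff:
  assumes "distinct cs"
  shows "(v, u) \<in> set (cycle_arcs cs) \<longleftrightarrow> v \<in> set cs \<and> u = cycle_succ cs v"
proof -
  have "distinct (map fst (cycle_arcs cs))" using assms by simp
  show ?thesis
  proof
    assume "(v, u) \<in> set (cycle_arcs cs)"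
    then show "v \<in> set cs \<and> u = cycle_succ cs v"
      unfolding cycle_succ_def using map_of_is_SomeI[OF \<open>distinct (map fst _)\<close>] set_zip_leftD
      unfolding cycle_arcs_def by fastforce
  next
    assume "v \<in> set cs \<and> u = cycle_succ cs v"
    then obtain u' where "map_of (cycle_arcs cs) v = Some u'"
      by (metis map_fst_cycle_arcs map_of_eq_None_iff not_None_eq set_map)
    then show "(v, u) \<in> set (cycle_arcs cs)"
      using \<open>v \<in> set cs \<and> u = cycle_succ cs v\<close> unfolding cycle_succ_def by (simp add: map_of_SomeD)
  qed
qed

lemma cycle_succ_bij:
  assumes "distinct cs"
  shows "bij_betw (cycle_succ cs) (set cs) (set cs)"
proof -
  have succ: "(v, cycle_succ cs v) \<in> set (cycle_arcs cs)" if "v \<in> set cs" for v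
    using in_cycle_arcs_iff[OF assms] that by blast
  have "cycle_succ cs v \<in> set cs" if "v \<in> set cs" for v
    using set_zip_rightD[OF succ[OF that, unfolded cycle_arcs_def]] by simp
  moreover have "inj_on (cycle_succ cs) (set cs)"
  proof (rule inj_onI)
    fix v v' assume v: "v \<in> set cs" "v' \<in> set cs" "cycle_succ cs v = cycle_succ cs v'"
    have "distinct (map snd (cycle_arcs cs))" using assms by simp
    then have "inj_on snd (set (cycle_arcs cs))" by (simp only: distinct_map)
    moreover have "snd (v, cycle_succ cs v) = snd (v', cycle_succ cs v')" using v(3) by simp
    ultimately have "(v, cycle_succ cs v) = (v', cycle_succ cs v')"
      using succ[OF v(1)] succ[OF v(2)] by (rule inj_onD)
    then show "v = v'" by simp
  qed
  ultimately show ?thesis by (simp add: bij_betw_def endo_inj_surj image_subset_iff)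
qed

lemma cycle_succ_arc:
  assumes "directed_cycle A cs" "v \<in> set cs"
  shows "(v, cycle_succ cs v) \<in> A"
proof -
  have "distinct cs" using assms(1) by (simp add: directed_cycle_iff)
  then have "(v, cycle_succ cs v) \<in> set (cycle_arcs cs)"
    using in_cycle_arcs_iff[of cs v "cycle_succ cs v"] assms(2) by simp
  then show ?thesis using assms(1) by (auto simp: directed_cycle_iff)
qed

section \<open>Balanced multisets of arcs\<close>

definition balanced :: "('a \<times> 'a) multiset \<Rightarrow> bool" where
  "balanced F \<longleftrightarrow> image_mset fst F = image_mset snd F"

definition head_weight :: "('a \<Rightarrow> 'g::comm_monoid_add) \<Rightarrow> ('a \<times> 'a) multiset \<Rightarrow> 'g" where
  "head_weight w F = (\<Sum>a\<in>#F. w (snd a))"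

lemma head_weight_empty [simp]: "head_weight w {#} = 0"
  and head_weight_union [simp]: "head_weight w (F + G) = head_weight w F + head_weight w G"
  unfolding head_weight_def by simp_all

lemma balanced_union: "balanced F \<Longrightarrow> balanced G \<Longrightarrow> balanced (F + G)"
  unfolding balanced_def by simp

lemma balanced_diff: "G \<subseteq># F \<Longrightarrow> balanced F \<Longrightarrow> balanced G \<Longrightarrow> balanced (F - G)"
  unfolding balanced_def by (simp add: image_mset_Diff)

lemma balanced_cycle_arcs: "balanced (mset (cycle_arcs cs))"
proof -
  have "mset (rotate1 cs) = mset cs" by (cases cs) simp_all
  then show ?thesis unfolding balanced_def by (simp flip: mset_map)
qed

lemma head_weight_cycle_arcs:
  assumes "distinct cs"
  shows "head_weight w (mset (cycle_arcs cs)) = sum w (set cs)"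
proof -
  have "map (\<lambda>a. w (snd a)) (cycle_arcs cs) = map w (map snd (cycle_arcs cs))"
    by (simp only: map_map comp_def)
  then have "head_weight w (mset (cycle_arcs cs)) = sum_list (map w (rotate1 cs))"
    unfolding head_weight_def by (simp flip: mset_map add: sum_mset_sum_list)
  also have "\<dots> = sum_list (map w cs)" by (cases cs) (simp_all add: add.commute)
  also have "\<dots> = sum w (set cs)" using assms by (rule sum_list_distinct_conv_sum_set)
  finally show ?thesis .
qed

lemma mset_cycle_arcs_subset: "directed_cycle (set_mset F) cs \<Longrightarrow> mset (cycle_arcs cs) \<subseteq># F"
proof -
  assume cyc: "directed_cycle (set_mset F) cs"
  then have "distinct (cycle_arcs cs)" unfolding directed_cycle_iff cycle_arcs_def
    by (simp add: distinct_zipI1)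
  then have "mset (cycle_arcs cs) = mset_set (set (cycle_arcs cs))" by (simp add: mset_set_set)
  also have "\<dots> \<subseteq># mset_set (set_mset F)" using cyc by (simp add: directed_cycle_iff)
  also have "\<dots> \<subseteq># F" by (rule mset_set_set_mset_msubset)
  finally show ?thesis .
qed

definition perm_arcs :: "('a \<Rightarrow> 'a) \<Rightarrow> 'a set \<Rightarrow> ('a \<times> 'a) multiset" where
  "perm_arcs f S = image_mset (\<lambda>v. (v, f v)) (mset_set S)"

lemma set_perm_arcs: "finite S \<Longrightarrow> set_mset (perm_arcs f S) = (\<lambda>v. (v, f v)) ` S"
  and size_perm_arcs: "size (perm_arcs f S) = card S"
  unfolding perm_arcs_def by simp_all

lemma
  assumes "bij_betw f S S"
  shows balanced_perm_arcs: "balanced (perm_arcs f S)"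
    and head_weight_perm_arcs: "head_weight w (perm_arcs f S) = sum w S"
proof -
  have "image_mset f (mset_set S) = mset_set S"
    using assms by (simp add: bij_betw_def image_mset_mset_set)
  then show "balanced (perm_arcs f S)"
    unfolding balanced_def perm_arcs_def by (simp add: image_mset.compositionality comp_def)
  have "head_weight w (perm_arcs f S) = (\<Sum>v\<in>S. w (f v))"
    unfolding head_weight_def perm_arcs_def
    by (simp add: sum_unfold_sum_mset image_mset.compositionality comp_def)
  also have "\<dots> = sum w S" using assms by (rule sum.reindex_bij_betw)
  finally show "head_weight w (perm_arcs f S) = sum w S" .
qed

text \<open>Follow out-arcs, which exist at every head by balance, until a vertex repeats.\<close>
lemma balanced_has_cycle:
  assumes "balanced F" "F \<noteq> {#}"
  obtains cs where "directed_cycle (set_mset F) cs"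
proof -
  let ?T = "snd ` set_mset F"
  have "\<exists>u. (v, u) \<in># F" if "v \<in> ?T" for v
  proof -
    have "v \<in># image_mset fst F" using that assms(1) unfolding balanced_def by simp
    then show ?thesis by force
  qed
  then obtain s where s: "\<And>v. v \<in> ?T \<Longrightarrow> (v, s v) \<in># F" by metis
  obtain a0 where "a0 \<in># F" using assms(2) by blast
  define v where "v i = (s ^^ i) (snd a0)" for i
  have vT: "v i \<in> ?T" for i
  proof (induction i)
    case 0 then show ?case using \<open>a0 \<in># F\<close> by (simp add: v_def)
  next
    case (Suc i) then show ?case using s[OF Suc] by (force simp: v_def)
  qed
  have arc: "(v i, v (Suc i)) \<in># F" for i using s[OF vT[of i]] by (simp add: v_def)
  have "\<not> inj_on v {..card ?T}"
    using card_inj_on_le[of v "{..card ?T}" ?T] vT by auto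
  then have ex: "\<exists>j. \<exists>i<j. v i = v j" unfolding inj_on_def by (metis linorder_neqE_nat)
  define J where "J = (LEAST j. \<exists>i<j. v i = v j)"
  obtain I where I: "I < J" "v I = v J" using LeastI_ex[OF ex] unfolding J_def by blast
  have v_distinct: "v p \<noteq> v q" if "p < q" "q < J" for p q
    using not_less_Least[of q "\<lambda>j. \<exists>i<j. v i = v j"] that unfolding J_def by blast
  define cs where "cs = map (\<lambda>t. v (I + t)) [0..<J - I]"
  show thesis
  proof (rule that, unfold directed_cycle_def, intro conjI allI impI)
    show "cs \<noteq> []" using I by (simp add: cs_def)
    show "distinct cs"
      unfolding cs_def distinct_map
      by (auto simp: inj_on_def)
        (metis linorder_neqE_nat add_less_cancel_left v_distinct less_diff_conv add.commute)
    fix k assume k: "k < length cs"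
    show "(cs ! k, cs ! ((k + 1) mod length cs)) \<in> set_mset F"
    proof (cases "k + 1 < length cs")
      case True
      then show ?thesis using arc[of "I + k"] by (simp add: cs_def)
    next
      case False
      then have "k + 1 = J - I" "Suc (I + k) = J" using k I(1) by (simp_all add: cs_def)
      then show ?thesis using arc[of "I + k"] I by (simp add: cs_def)
    qed
  qed
qed

lemma balanced_remove_cycle:
  assumes "balanced F" "directed_cycle (set_mset F) cs"
  shows "balanced (F - mset (cycle_arcs cs))"
    and "size (F - mset (cycle_arcs cs)) + length cs = size F"
    and "head_weight w F = head_weight w (F - mset (cycle_arcs cs)) + sum w (set cs)"
proof -
  have sub: "mset (cycle_arcs cs) \<subseteq># F" using assms(2) by (rule mset_cycle_arcs_subset)
  show "balanced (F - mset (cycle_arcs cs))"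
    using balanced_diff[OF sub assms(1) balanced_cycle_arcs] .
  show "size (F - mset (cycle_arcs cs)) + length cs = size F"
    using size_Diff_submset[OF sub] size_mset_mono[OF sub] by simp
  have "F = (F - mset (cycle_arcs cs)) + mset (cycle_arcs cs)" using sub by simp
  then show "head_weight w F = head_weight w (F - mset (cycle_arcs cs)) + sum w (set cs)"
    using head_weight_cycle_arcs assms(2) directed_cycle_iff by (metis head_weight_union)
qed

lemma balanced_head_weight_eq_0:
  fixes w :: "'a \<Rightarrow> 'g::ab_group_add"
  assumes short: "\<forall>cs. directed_cycle A cs \<and> length cs < n \<longrightarrow> sum w (set cs) = 0"
  shows "balanced F \<Longrightarrow> set_mset F \<subseteq> A \<Longrightarrow> size F < n \<Longrightarrow> head_weight w F = 0"
proof (induction "size F" arbitrary: F rule: less_induct)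
  case less
  show ?case
  proof (cases "F = {#}")
    case False
    then obtain cs where cs: "directed_cycle (set_mset F) cs"
      using balanced_has_cycle less.prems(1) by blast
    let ?F' = "F - mset (cycle_arcs cs)"
    note remove = balanced_remove_cycle[OF less.prems(1) cs]
    have "cs \<noteq> []" using cs by (simp add: directed_cycle_def)
    have "directed_cycle A cs" using cs less.prems(2) by (rule directed_cycle_mono)
    moreover have "length cs < n" using remove(2) less.prems(3) by simp
    ultimately have "sum w (set cs) = 0" using short by blast
    moreover have "head_weight w ?F' = 0"
    proof (rule less.hyps)
      show "size ?F' < size F" using remove(2) \<open>cs \<noteq> []\<close> by (cases cs) auto
      then show "size ?F' < n" using less.prems(3) by simp
      show "balanced ?F'" by (rule remove(1))
      show "set_mset ?F' \<subseteq> A" using less.prems(2) by (auto dest: in_diffD)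
    qed
    ultimately show ?thesis using remove(3)[of w] by simp
  qed simp
qed

lemma nonzero_cycle_if_nonzero_perm:
  fixes w :: "'a \<Rightarrow> 'g::ab_group_add"
  assumes "finite S" "bij_betw f S S" "\<forall>v\<in>S. (v, f v) \<in> A" "sum w S \<noteq> 0"
  shows "\<exists>cs. directed_cycle A cs \<and> sum w (set cs) \<noteq> 0"
proof (rule ccontr)
  assume "\<not> ?thesis"
  then have "head_weight w (perm_arcs f S) = 0"
    using assms(1,3) balanced_perm_arcs[OF assms(2)]
    by (intro balanced_head_weight_eq_0[where n = "Suc (card S)"])
      (auto simp: set_perm_arcs size_perm_arcs)
  then show False using head_weight_perm_arcs[OF assms(2), of w] assms(4) by simp
qed

text \<open>Fewer than 2|V| arcs leave room for at most one cycle through all of V.\<close>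
lemma balanced_head_weight_0_or_sum:
  fixes w :: "'a \<Rightarrow> 'g::ab_group_add"
  assumes short: "\<forall>cs. directed_cycle A cs \<and> length cs < card V \<longrightarrow> sum w (set cs) = 0"
    and "finite V"
  shows "balanced F \<Longrightarrow> set_mset F \<subseteq> A \<Longrightarrow> fst ` set_mset F \<subseteq> V \<Longrightarrow> size F < 2 * card V \<Longrightarrow>
    head_weight w F = 0 \<or> head_weight w F = sum w V"
proof (induction "size F" arbitrary: F rule: less_induct)
  case less
  show ?case
  proof (cases "F = {#}")
    case False
    then obtain cs where cs: "directed_cycle (set_mset F) cs"
      using balanced_has_cycle less.prems(1) by blast
    let ?F' = "F - mset (cycle_arcs cs)"
    note remove = balanced_remove_cycle[OF less.prems(1) cs]
    have "cs \<noteq> []" "distinct cs" "set (cycle_arcs cs) \<subseteq> set_mset F"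
      using cs by (simp_all add: directed_cycle_iff)
    have "directed_cycle A cs" using cs less.prems(2) by (rule directed_cycle_mono)
    have F': "balanced ?F'" "set_mset ?F' \<subseteq> A" "fst ` set_mset ?F' \<subseteq> V"
      using remove(1) less.prems(2,3) by (auto dest: in_diffD)
    have "set cs = fst ` set (cycle_arcs cs)" by (metis map_fst_cycle_arcs set_map)
    then have "set cs \<subseteq> V"
      using \<open>set (cycle_arcs cs) \<subseteq> set_mset F\<close> less.prems(3) by blast
    then have "length cs \<le> card V"
      using card_mono[OF \<open>finite V\<close>] distinct_card[OF \<open>distinct cs\<close>] by metis
    show ?thesis
    proof (cases "length cs < card V")
      case True
      then have "sum w (set cs) = 0" using short \<open>directed_cycle A cs\<close> by blast
      moreover have "size ?F' < size F" using remove(2) \<open>cs \<noteq> []\<close> by (cases cs) auto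
      then have "head_weight w ?F' = 0 \<or> head_weight w ?F' = sum w V"
        using less.hyps[OF _ F'] less.prems(4) by simp
      ultimately show ?thesis using remove(3)[of w] by auto
    next
      case False
      then have "set cs = V"
        using \<open>length cs \<le> card V\<close> \<open>set cs \<subseteq> V\<close> \<open>finite V\<close> distinct_card[OF \<open>distinct cs\<close>]
        by (simp add: card_subset_eq)
      moreover have "size ?F' < card V"
        using remove(2) \<open>set cs = V\<close> less.prems(4) distinct_card[OF \<open>distinct cs\<close>] by simp
      then have "head_weight w ?F' = 0" using balanced_head_weight_eq_0[OF short F'(1,2)] by blast
      ultimately show ?thesis using remove(3)[of w] by simp
    qed
  qed simp
qed

section \<open>Shortest cycles of nonzero weight\<close>

lemma directed_cycle_chord_shortcut:
  assumes "distinct (x # ys)" "y \<in> set ys" "y \<noteq> hd ys"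
  obtains C0 where "directed_cycle (insert (x, y) (set (cycle_arcs (x # ys)))) C0"
    and "length C0 < length (x # ys)"
proof -
  have "ys \<noteq> []" using assms(2) by auto
  obtain p where p: "p < length ys" "ys ! p = y" using assms(2) by (metis in_set_conv_nth)
  have "p \<noteq> 0"
  proof
    assume "p = 0"
    then have "y = hd ys" using p \<open>ys \<noteq> []\<close> by (simp add: hd_conv_nth)
    then show False using assms(3) by simp
  qed
  define C0 where "C0 = x # drop p ys"
  have "drop p ys \<noteq> []" "hd (drop p ys) = y" "last (drop p ys) = last ys"
    using p by (simp_all add: hd_drop_conv_nth)
  then have arcs_C0: "cycle_arcs C0 = (x, y) # drop p (zip ys (tl ys)) @ [(last ys, x)]"
    unfolding C0_def using cycle_arcs_Cons[of "drop p ys" x] by (simp add: drop_zip tl_drop)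
  have "set (zip ys (tl ys)) \<subseteq> set (cycle_arcs (x # ys))" "(last ys, x) \<in> set (cycle_arcs (x # ys))"
    unfolding cycle_arcs_Cons[OF \<open>ys \<noteq> []\<close>] by auto
  then have "set (cycle_arcs C0) \<subseteq> insert (x, y) (set (cycle_arcs (x # ys)))"
    unfolding arcs_C0 using set_drop_subset[of p "zip ys (tl ys)"] by auto
  moreover have "C0 \<noteq> []" "distinct C0"
    unfolding C0_def using assms(1) by (auto dest: in_set_dropD)
  ultimately have "directed_cycle (insert (x, y) (set (cycle_arcs (x # ys)))) C0"
    by (simp add: directed_cycle_iff)
  moreover have "length C0 < length (x # ys)" using p \<open>p \<noteq> 0\<close> by (simp add: C0_def)
  ultimately show thesis by (rule that)
qed

text \<open>The shortcut through the chord (x, f x) is a shorter cycle, hence of weight 0. Removing it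
  from the cycle together with the arcs of f leaves a balanced multiset of fewer than 2n arcs,
  whose weight is 0 or w(V) by the previous lemma; yet the total weight is 2 w(V).\<close>
lemma shortest_cycle_perm_arc_hd:
  fixes w :: "'a \<Rightarrow> 'g::ab_group_add"
  assumes no_order_two: "\<forall>g::'g. g + g = 0 \<longrightarrow> g = 0" and "irrefl A"
    and cyc: "directed_cycle A (x # ys)" and nz: "sum w (set (x # ys)) \<noteq> 0"
    and short: "\<forall>ds. directed_cycle A ds \<and> length ds < length (x # ys) \<longrightarrow> sum w (set ds) = 0"
    and f: "bij_betw f (set (x # ys)) (set (x # ys))" "\<forall>v\<in>set (x # ys). (v, f v) \<in> A"
  shows "(x, f x) \<in> set (cycle_arcs (x # ys))"
proof (rule ccontr)
  assume chord: "(x, f x) \<notin> set (cycle_arcs (x # ys))"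
  let ?cs = "x # ys" and ?V = "set (x # ys)"
  have "distinct ?cs" "set (cycle_arcs ?cs) \<subseteq> A" using cyc by (simp_all add: directed_cycle_iff)
  have "f x \<noteq> x" using f(2) \<open>irrefl A\<close> by (force simp: irrefl_def)
  moreover have "f x \<in> ?V" using bij_betwE[OF f(1)] by simp
  ultimately have "f x \<in> set ys" by simp
  then have "ys \<noteq> []" by auto
  then have "(x, hd ys) \<in> set (cycle_arcs ?cs)" by (simp add: cycle_arcs_Cons)
  then have "f x \<noteq> hd ys" using chord by auto
  then obtain C0 where C0: "directed_cycle (insert (x, f x) (set (cycle_arcs ?cs))) C0"
    "length C0 < length ?cs"
    using directed_cycle_chord_shortcut[OF \<open>distinct ?cs\<close> \<open>f x \<in> set ys\<close>] by blast
  define F where "F = mset (cycle_arcs ?cs) + perm_arcs f ?V"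
  have "balanced F"
    unfolding F_def by (intro balanced_union balanced_cycle_arcs balanced_perm_arcs f(1))
  have F_A: "set_mset F \<subseteq> A"
    using \<open>set (cycle_arcs ?cs) \<subseteq> A\<close> f(2) by (auto simp: F_def set_perm_arcs)
  have "fst ` set (cycle_arcs ?cs) = ?V" by (metis map_fst_cycle_arcs set_map)
  then have F_V: "fst ` set_mset F \<subseteq> ?V" by (auto simp: F_def set_perm_arcs)
  have "size F = 2 * card ?V"
    using distinct_card[OF \<open>distinct ?cs\<close>] by (simp add: F_def size_perm_arcs)
  have weight_F: "head_weight w F = sum w ?V + sum w ?V"
    unfolding F_def
    using head_weight_cycle_arcs[OF \<open>distinct ?cs\<close>, of w] head_weight_perm_arcs[OF f(1), of w]
    by simp
  have "insert (x, f x) (set (cycle_arcs ?cs)) \<subseteq> set_mset F" by (auto simp: F_def set_perm_arcs)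
  with C0(1) have C0_F: "directed_cycle (set_mset F) C0" by (rule directed_cycle_mono)
  then have "directed_cycle A C0" using F_A by (rule directed_cycle_mono)
  then have "sum w (set C0) = 0" using short C0(2) by blast
  let ?F' = "F - mset (cycle_arcs C0)"
  note remove = balanced_remove_cycle[OF \<open>balanced F\<close> C0_F]
  have "set_mset ?F' \<subseteq> set_mset F" by (rule set_mset_mono) simp
  have "head_weight w ?F' = 0 \<or> head_weight w ?F' = sum w ?V"
  proof (rule balanced_head_weight_0_or_sum)
    show "\<forall>ds. directed_cycle A ds \<and> length ds < card ?V \<longrightarrow> sum w (set ds) = 0"
      using short distinct_card[OF \<open>distinct ?cs\<close>] by simp
    show "size ?F' < 2 * card ?V"
      using remove(2) \<open>size F = 2 * card ?V\<close> C0_F by (cases C0) (auto simp: directed_cycle_iff)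
    show "set_mset ?F' \<subseteq> A" using \<open>set_mset ?F' \<subseteq> set_mset F\<close> F_A by (rule subset_trans)
    show "fst ` set_mset ?F' \<subseteq> ?V" using \<open>set_mset ?F' \<subseteq> set_mset F\<close> F_V by blast
  qed (use remove(1) in simp_all)
  moreover have "head_weight w ?F' = sum w ?V + sum w ?V"
    using remove(3)[of w] weight_F \<open>sum w (set C0) = 0\<close> by simp
  ultimately have "sum w ?V = 0"
    using no_order_two[rule_format, of "sum w ?V"] by auto
  then show False using nz by simp
qed

lemma shortest_cycle_unique_perm:
  fixes w :: "'a \<Rightarrow> 'g::ab_group_add"
  assumes no_order_two: "\<forall>g::'g. g + g = 0 \<longrightarrow> g = 0" and "irrefl A"
    and cyc: "directed_cycle A cs" and "sum w (set cs) \<noteq> 0"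
    and "\<forall>ds. directed_cycle A ds \<and> length ds < length cs \<longrightarrow> sum w (set ds) = 0"
    and "bij_betw f (set cs) (set cs)" "\<forall>v\<in>set cs. (v, f v) \<in> A"
    and "v \<in> set cs"
  shows "f v = cycle_succ cs v"
proof -
  obtain p where "p < length cs" "cs ! p = v" using \<open>v \<in> set cs\<close> by (metis in_set_conv_nth)
  moreover have "cs \<noteq> []" using \<open>v \<in> set cs\<close> by auto
  ultimately have "hd (rotate p cs) = v" by (simp add: hd_rotate_conv_nth)
  moreover have "rotate p cs \<noteq> []" using \<open>cs \<noteq> []\<close> by simp
  ultimately obtain ys where rot: "rotate p cs = v # ys" by (cases "rotate p cs") auto
  have "(v, f v) \<in> set (cycle_arcs (rotate p cs))"
    by (rule shortest_cycle_perm_arc_hd[OF no_order_two \<open>irrefl A\<close>, of v ys w f, folded rot])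
      (simp_all only: directed_cycle_rotate set_rotate length_rotate, fact+)
  then have "(v, f v) \<in> set (cycle_arcs cs)" by simp
  moreover have "distinct cs" using cyc by (simp add: directed_cycle_iff)
  ultimately show ?thesis using in_cycle_arcs_iff[of cs v "f v"] by simp
qed

section \<open>The exchange digraph\<close>

lemma exch_arcs_converse: "exch_arcs E M2 M1 B = (exch_arcs E M1 M2 B)\<inverse>"
  unfolding exch_arcs_def by auto

lemma irrefl_exch_arcs: "irrefl (exch_arcs E M1 M2 B)"
  unfolding exch_arcs_def irrefl_def by auto

lemma exch_arcs_out_of_basis:
  "(x, y) \<in> exch_arcs E M1 M2 B \<Longrightarrow> x \<in> B \<Longrightarrow> y \<in> E - B \<and> insert y (B - {x}) \<in> M1"
  and exch_arcs_into_basis: "(y, x) \<in> exch_arcs E M1 M2 B \<Longrightarrow> y \<notin> B \<Longrightarrow> x \<in> B"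
  and exch_arcsI: "x \<in> B \<Longrightarrow> y \<in> E - B \<Longrightarrow> insert y (B - {x}) \<in> M1 \<Longrightarrow> (x, y) \<in> exch_arcs E M1 M2 B"
  unfolding exch_arcs_def by auto

text \<open>The label of an arc of D(B) depends only on its head v: it is \<psi> v if v \<notin> B and
  - \<psi> v if v \<in> B.\<close>
definition exch_weight :: "('a \<Rightarrow> 'g::ab_group_add) \<Rightarrow> 'a set \<Rightarrow> 'a \<Rightarrow> 'g" where
  "exch_weight \<psi> B v = (if v \<in> B then - \<psi> v else \<psi> v)"

lemma cycle_label_exch_arcs:
  assumes "directed_cycle (exch_arcs E M1 M2 B) cs"
  shows "cycle_label (arc_label \<psi> B) cs = sum (exch_weight \<psi> B) (set cs)"
proof -
  have "arc_label \<psi> B a = exch_weight \<psi> B (snd a)" if "a \<in> set (cycle_arcs cs)" for a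
    using that assms by (auto simp: directed_cycle_iff arc_label_def exch_weight_def exch_arcs_def)
  then have "cycle_label (arc_label \<psi> B) cs = head_weight (exch_weight \<psi> B) (mset (cycle_arcs cs))"
    unfolding cycle_label_eq_sum_list head_weight_def
    by (simp flip: mset_map add: sum_mset_sum_list cong: map_cong)
  also have "\<dots> = sum (exch_weight \<psi> B) (set cs)"
    using assms by (simp add: directed_cycle_iff head_weight_cycle_arcs)
  finally show ?thesis .
qed

lemma sum_symmetric_difference:
  fixes \<psi> :: "'a \<Rightarrow> 'g::ab_group_add"
  assumes "finite B" "finite V"
  shows "sum \<psi> (sym_diff B V) = sum \<psi> B + sum (exch_weight \<psi> B) V"
proof -
  have "sum (exch_weight \<psi> B) V = sum (exch_weight \<psi> B) (V \<inter> B) + sum (exch_weight \<psi> B) (V - B)"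
    using assms(2) by (rule sum.Int_Diff)
  also have "\<dots> = sum \<psi> (V - B) - sum \<psi> (B \<inter> V)"
    by (simp add: exch_weight_def sum_negf Int_commute)
  finally have "sum (exch_weight \<psi> B) V = sum \<psi> (V - B) - sum \<psi> (B \<inter> V)" .
  moreover have "sum \<psi> (sym_diff B V) = sum \<psi> (B - V) + sum \<psi> (V - B)"
    using assms by (intro sum.union_disjoint) auto
  moreover have "sum \<psi> B = sum \<psi> (B \<inter> V) + sum \<psi> (B - V)"
    using assms(1) by (rule sum.Int_Diff)
  ultimately show ?thesis by (simp add: algebra_simps)
qed

text \<open>The symmetric difference of two common bases is covered by disjoint cycles of the
  exchange digraph: pair its two halves once by M1-exchanges and once by M2-exchanges.\<close>
lemma exch_arcs_perm_symmetric_difference: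
  assumes "matroid E M1" "matroid E M2" "B0 \<in> M1" "B0 \<in> M2" "B \<in> M1" "B \<in> M2"
  obtains f where "bij_betw f (sym_diff B0 B) (sym_diff B0 B)"
    and "\<forall>v\<in>sym_diff B0 B. (v, f v) \<in> exch_arcs E M1 M2 B0"
proof -
  interpret M1: matroid_bases E M1 by (rule matroid_bases.intro) fact
  interpret M2: matroid_bases E M2 by (rule matroid_bases.intro) fact
  obtain \<sigma>1 where \<sigma>1: "bij_betw \<sigma>1 (B0 - B) (B - B0)" "\<forall>x\<in>B0 - B. insert (\<sigma>1 x) (B0 - {x}) \<in> M1"
    using M1.exchange_bijection[OF assms(3,5)] by blast
  obtain \<sigma>2 where \<sigma>2: "bij_betw \<sigma>2 (B0 - B) (B - B0)" "\<forall>x\<in>B0 - B. insert (\<sigma>2 x) (B0 - {x}) \<in> M2"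
    using M2.exchange_bijection[OF assms(4,6)] by blast
  define f where "f v = (if v \<in> B0 then \<sigma>1 v else inv_into (B0 - B) \<sigma>2 v)" for v
  have "bij_betw f (B0 - B) (B - B0)"
    using \<sigma>1(1) by (rule bij_betw_cong[THEN iffD1, rotated]) (simp add: f_def)
  moreover have "bij_betw f (B - B0) (B0 - B)"
    using bij_betw_inv_into[OF \<sigma>2(1)] by (rule bij_betw_cong[THEN iffD1, rotated]) (simp add: f_def)
  ultimately have "bij_betw f (sym_diff B0 B) (B - B0 \<union> (B0 - B))"
    by (rule bij_betw_combine) blast
  then have "bij_betw f (sym_diff B0 B) (sym_diff B0 B)" by (simp add: Un_commute)
  moreover have "(v, f v) \<in> exch_arcs E M1 M2 B0" if "v \<in> sym_diff B0 B" for v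
  proof (cases "v \<in> B0")
    case True
    then have "\<sigma>1 v \<in> B - B0" using that \<sigma>1(1) bij_betwE by blast
    then show ?thesis using True that \<sigma>1(2) M1.basis_subset[OF assms(5)]
      by (auto simp: exch_arcs_def f_def)
  next
    case False
    then have "v \<in> B - B0" "inv_into (B0 - B) \<sigma>2 v \<in> B0 - B"
      using that bij_betwE[OF bij_betw_inv_into[OF \<sigma>2(1)]] by blast+
    moreover have "\<sigma>2 (inv_into (B0 - B) \<sigma>2 v) = v"
      using \<open>v \<in> B - B0\<close> \<sigma>2(1) by (simp add: bij_betw_inv_into_right)
    ultimately show ?thesis using False \<sigma>2(2) M2.basis_subset[OF assms(6)]
      by (force simp: exch_arcs_def f_def)
  qed
  ultimately show thesis using that by blast
qed

lemma exch_cycle_succ_image: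
  assumes "directed_cycle (exch_arcs E M1 M2 B) cs"
  shows "cycle_succ cs ` (set cs \<inter> B) = set cs - B"
proof -
  let ?s = "cycle_succ cs"
  have s_bij: "bij_betw ?s (set cs) (set cs)"
    using assms by (simp add: directed_cycle_iff cycle_succ_bij)
  have flip: "?s v \<notin> B \<longleftrightarrow> v \<in> B" if "v \<in> set cs" for v
  proof (cases "v \<in> B")
    case True
    then show ?thesis using exch_arcs_out_of_basis[OF cycle_succ_arc[OF assms that]] by blast
  next
    case False
    then show ?thesis using exch_arcs_into_basis[OF cycle_succ_arc[OF assms that]] by blast
  qed
  have "?s ` set cs = set cs" using s_bij by (simp add: bij_betw_def)
  show ?thesis
  proof (intro equalityI subsetI)
    fix y assume "y \<in> ?s ` (set cs \<inter> B)"
    then show "y \<in> set cs - B" using flip \<open>?s ` set cs = set cs\<close> by blast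
  next
    fix y assume y: "y \<in> set cs - B"
    then obtain v where "v \<in> set cs" "y = ?s v" using \<open>?s ` set cs = set cs\<close> by blast
    then show "y \<in> ?s ` (set cs \<inter> B)" using flip y by blast
  qed
qed

text \<open>A second matching of X = V \<inter> B0 with V - B0 by M1-exchanges would reroute the cycle into
  a permutation of V along other arcs, which a shortest cycle of nonzero weight does not admit.\<close>
lemma shortest_exch_cycle_unique_matching:
  fixes w :: "'a \<Rightarrow> 'g::ab_group_add"
  assumes no_order_two: "\<forall>g::'g. g + g = 0 \<longrightarrow> g = 0"
    and cyc: "directed_cycle (exch_arcs E M1 M2 B0) cs" and nz: "sum w (set cs) \<noteq> 0"
    and short: "\<forall>ds. directed_cycle (exch_arcs E M1 M2 B0) ds \<and> length ds < length cs \<longrightarrow>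
      sum w (set ds) = 0"
    and W: "W \<subseteq> set cs \<inter> B0" "bij_betw h W W"
      "\<forall>z\<in>W. insert (cycle_succ cs (h z)) (B0 - {z}) \<in> M1"
    and "z \<in> W"
  shows "h z = z"
proof -
  let ?A = "exch_arcs E M1 M2 B0" and ?V = "set cs" and ?s = "cycle_succ cs"
  let ?f = "\<lambda>v. if v \<in> W then ?s (h v) else ?s v"
  have s_bij: "bij_betw ?s ?V ?V" using cyc by (simp add: directed_cycle_iff cycle_succ_bij)
  have "W \<subseteq> ?V" using W(1) by blast
  have f_arcs: "\<forall>v\<in>?V. (v, ?f v) \<in> ?A"
  proof
    fix v assume "v \<in> ?V"
    show "(v, ?f v) \<in> ?A"
    proof (cases "v \<in> W")
      case True
      then have "v \<in> B0" "h v \<in> ?V \<inter> B0" using bij_betwE[OF W(2)] W(1) by blast+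
      then have "?s (h v) \<in> E - B0"
        using exch_arcs_out_of_basis[OF cycle_succ_arc[OF cyc]] by blast
      then have "(v, ?s (h v)) \<in> ?A" using \<open>v \<in> B0\<close> W(3) True by (blast intro: exch_arcsI)
      with True show ?thesis by simp
    qed (simp add: cycle_succ_arc[OF cyc \<open>v \<in> ?V\<close>])
  qed
  have "z \<in> ?V" "h z \<in> ?V" using bij_betwE[OF W(2)] \<open>W \<subseteq> ?V\<close> \<open>z \<in> W\<close> by blast+
  have "?f z = ?s z"
    using shortest_cycle_unique_perm[OF no_order_two irrefl_exch_arcs cyc nz short
        bij_betw_reroute[OF s_bij \<open>W \<subseteq> ?V\<close> W(2)] f_arcs \<open>z \<in> ?V\<close>] .
  then have "?s (h z) = ?s z" using \<open>z \<in> W\<close> by simp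
  then show "h z = z"
    using inj_onD[OF bij_betw_imp_inj_on[OF s_bij] _ \<open>h z \<in> ?V\<close> \<open>z \<in> ?V\<close>] by blast
qed

lemma shortest_exch_cycle_basis:
  fixes w :: "'a \<Rightarrow> 'g::ab_group_add"
  assumes no_order_two: "\<forall>g::'g. g + g = 0 \<longrightarrow> g = 0"
    and "matroid E M1" "B0 \<in> M1"
    and cyc: "directed_cycle (exch_arcs E M1 M2 B0) cs" and nz: "sum w (set cs) \<noteq> 0"
    and short: "\<forall>ds. directed_cycle (exch_arcs E M1 M2 B0) ds \<and> length ds < length cs \<longrightarrow>
      sum w (set ds) = 0"
  shows "sym_diff B0 (set cs) \<in> M1"
proof -
  interpret M1: matroid_bases E M1 by (rule matroid_bases.intro) fact
  let ?V = "set cs" and ?s = "cycle_succ cs"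
  define X where "X = ?V \<inter> B0"
  have "X \<subseteq> B0" "X \<subseteq> ?V" unfolding X_def by blast+
  have "bij_betw ?s ?V ?V" using cyc by (simp add: directed_cycle_iff cycle_succ_bij)
  then have "inj_on ?s X" using \<open>X \<subseteq> ?V\<close> by (auto simp: bij_betw_def intro: inj_on_subset)
  moreover have "?s ` X = ?V - B0" unfolding X_def using cyc by (rule exch_cycle_succ_image)
  then have "?s ` X \<inter> B0 = {}" by blast
  moreover have "\<forall>x\<in>X. insert (?s x) (B0 - {x}) \<in> M1"
    using exch_arcs_out_of_basis[OF cycle_succ_arc[OF cyc]] unfolding X_def by blast
  ultimately have "B0 - X \<union> ?s ` X \<in> M1 \<or> (\<exists>W h. W \<subseteq> X \<and> W \<noteq> {} \<and> bij_betw h W W \<and>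
      (\<forall>z\<in>W. h z \<noteq> z \<and> insert (?s (h z)) (B0 - {z}) \<in> M1))"
    using M1.multiple_exchange[OF assms(3) \<open>X \<subseteq> B0\<close>] by blast
  then have "B0 - X \<union> ?s ` X \<in> M1"
    using shortest_exch_cycle_unique_matching[OF no_order_two cyc nz short] unfolding X_def
    by (metis all_not_in_conv)
  moreover have "B0 - X \<union> ?s ` X = sym_diff B0 ?V"
    using \<open>?s ` X = ?V - B0\<close> unfolding X_def by blast
  ultimately show ?thesis by simp
qed

text \<open>The M2 half follows from the M1 half applied to the reversed cycle, since
  reversing all arcs swaps the roles of M1 and M2.\<close>
lemma shortest_exch_cycle_common_basis:
  fixes w :: "'a \<Rightarrow> 'g::ab_group_add"
  assumes no_order_two: "\<forall>g::'g. g + g = 0 \<longrightarrow> g = 0"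
    and "matroid E M1" "matroid E M2" "B0 \<in> M1" "B0 \<in> M2"
    and cyc: "directed_cycle (exch_arcs E M1 M2 B0) cs" and nz: "sum w (set cs) \<noteq> 0"
    and short: "\<forall>ds. directed_cycle (exch_arcs E M1 M2 B0) ds \<and> length ds < length cs \<longrightarrow>
      sum w (set ds) = 0"
  shows "sym_diff B0 (set cs) \<in> M1" "sym_diff B0 (set cs) \<in> M2"
proof -
  show "sym_diff B0 (set cs) \<in> M1"
    using shortest_exch_cycle_basis[OF no_order_two assms(2,4) cyc nz short] .
  let ?rs = "rev (rotate1 cs)"
  have rs_cyc: "directed_cycle (exch_arcs E M2 M1 B0) ?rs"
    using directed_cycle_converse[OF cyc] by (simp only: exch_arcs_converse[of E M2 M1])
  have rs_short: "\<forall>ds. directed_cycle (exch_arcs E M2 M1 B0) ds \<and> length ds < length ?rs \<longrightarrow>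
      sum w (set ds) = 0"
  proof (intro allI impI, elim conjE)
    fix ds assume "directed_cycle (exch_arcs E M2 M1 B0) ds" "length ds < length ?rs"
    then have "directed_cycle (exch_arcs E M1 M2 B0) (rev (rotate1 ds))"
      "length (rev (rotate1 ds)) < length cs"
      using directed_cycle_converse[of "exch_arcs E M2 M1 B0" ds]
      by (simp_all add: exch_arcs_converse[of E M2 M1])
    then have "sum w (set (rev (rotate1 ds))) = 0" using short by blast
    then show "sum w (set ds) = 0" by simp
  qed
  have "sum w (set ?rs) \<noteq> 0" using nz by simp
  then have "sym_diff B0 (set ?rs) \<in> M2"
    using shortest_exch_cycle_basis[OF no_order_two assms(3,5) rs_cyc _ rs_short] by blast
  then show "sym_diff B0 (set cs) \<in> M2" by simp
qed

lemma exch_cycle_if_common_basis: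
  fixes \<psi> :: "'a \<Rightarrow> 'g::ab_group_add"
  assumes "matroid E M1" "matroid E M2" "B0 \<in> M1" "B0 \<in> M2" "B \<in> M1" "B \<in> M2"
    and "sum \<psi> B \<noteq> sum \<psi> B0"
  shows "\<exists>C. directed_cycle (exch_arcs E M1 M2 B0) C \<and> sum (exch_weight \<psi> B0) (set C) \<noteq> 0"
proof -
  obtain f where f: "bij_betw f (sym_diff B0 B) (sym_diff B0 B)"
    "\<forall>v\<in>sym_diff B0 B. (v, f v) \<in> exch_arcs E M1 M2 B0"
    using exch_arcs_perm_symmetric_difference[OF assms(1-6)] by blast
  have "finite B0" "finite B"
    using assms(1,3,5) matroid_bases.finite_basis matroid_bases.intro by blast+
  then have "finite (sym_diff B0 B)" by simp
  have "sym_diff B0 (sym_diff B0 B) = B" by blast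
  then have "sum \<psi> B = sum \<psi> B0 + sum (exch_weight \<psi> B0) (sym_diff B0 B)"
    using sum_symmetric_difference[OF \<open>finite B0\<close> \<open>finite (sym_diff B0 B)\<close>] by simp
  then have "sum (exch_weight \<psi> B0) (sym_diff B0 B) \<noteq> 0" using assms(7) by auto
  then show ?thesis by (rule nonzero_cycle_if_nonzero_perm[OF \<open>finite (sym_diff B0 B)\<close> f])
qed

lemma common_basis_if_exch_cycle:
  fixes \<psi> :: "'a \<Rightarrow> 'g::ab_group_add"
  assumes no_order_two: "\<forall>g::'g. g + g = 0 \<longrightarrow> g = 0"
    and "matroid E M1" "matroid E M2" "B0 \<in> M1" "B0 \<in> M2"
    and "directed_cycle (exch_arcs E M1 M2 B0) C" "sum (exch_weight \<psi> B0) (set C) \<noteq> 0"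
  shows "\<exists>B. B \<in> M1 \<and> B \<in> M2 \<and> sum \<psi> B \<noteq> sum \<psi> B0"
proof -
  let ?A = "exch_arcs E M1 M2 B0" and ?w = "exch_weight \<psi> B0"
  obtain cs where cs: "directed_cycle ?A cs" "sum ?w (set cs) \<noteq> 0"
    and "\<forall>ds. directed_cycle ?A ds \<and> sum ?w (set ds) \<noteq> 0 \<longrightarrow> length cs \<le> length ds"
    using ex_has_least_nat[of "\<lambda>C. directed_cycle ?A C \<and> sum ?w (set C) \<noteq> 0" C length] assms(6,7)
    by blast
  then have "\<forall>ds. directed_cycle ?A ds \<and> length ds < length cs \<longrightarrow> sum ?w (set ds) = 0"
    by (meson not_le)
  then have "sym_diff B0 (set cs) \<in> M1" "sym_diff B0 (set cs) \<in> M2"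
    using shortest_exch_cycle_common_basis[OF no_order_two assms(2-5) cs] by blast+
  moreover have "finite B0" using assms(2,4) matroid_bases.finite_basis matroid_bases.intro by blast
  then have "sum \<psi> (sym_diff B0 (set cs)) \<noteq> sum \<psi> B0"
    using sum_symmetric_difference[of B0 "set cs" \<psi>] cs(2) by simp
  ultimately show ?thesis by blast
qed

theorem theorem3p8:
  fixes E :: "'a set" and M1 M2 :: "'a set set"
    and \<psi> :: "'a \<Rightarrow> 'g::ab_group_add" and B0 :: "'a set"
  assumes no_order_two: "\<forall>g::'g. g + g = 0 \<longrightarrow> g = 0"
    and "matroid E M1" and "matroid E M2"
    and "B0 \<in> M1" and "B0 \<in> M2"
    and "(\<Sum>x\<in>B0. \<psi> x) = 0"
  shows "(\<exists>B. B \<in> M1 \<and> B \<in> M2 \<and> (\<Sum>x\<in>B. \<psi> x) \<noteq> 0) \<longleftrightarrow>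
         (\<exists>C. directed_cycle (exch_arcs E M1 M2 B0) C \<and>
              cycle_label (arc_label \<psi> B0) C \<noteq> 0)"
proof
  assume "\<exists>B. B \<in> M1 \<and> B \<in> M2 \<and> (\<Sum>x\<in>B. \<psi> x) \<noteq> 0"
  then obtain B where "B \<in> M1" "B \<in> M2" "sum \<psi> B \<noteq> sum \<psi> B0" using assms(6) by auto
  then obtain C where C: "directed_cycle (exch_arcs E M1 M2 B0) C"
    "sum (exch_weight \<psi> B0) (set C) \<noteq> 0"
    using exch_cycle_if_common_basis[OF assms(2-5)] by blast
  then show "\<exists>C. directed_cycle (exch_arcs E M1 M2 B0) C \<and> cycle_label (arc_label \<psi> B0) C \<noteq> 0"
    using cycle_label_exch_arcs[OF C(1), of \<psi>] by (intro exI[of _ C]) simp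
next
  assume "\<exists>C. directed_cycle (exch_arcs E M1 M2 B0) C \<and> cycle_label (arc_label \<psi> B0) C \<noteq> 0"
  then obtain C where C: "directed_cycle (exch_arcs E M1 M2 B0) C"
    "cycle_label (arc_label \<psi> B0) C \<noteq> 0" by blast
  then have "sum (exch_weight \<psi> B0) (set C) \<noteq> 0" using cycle_label_exch_arcs[OF C(1), of \<psi>] by simp
  then have "\<exists>B. B \<in> M1 \<and> B \<in> M2 \<and> sum \<psi> B \<noteq> sum \<psi> B0"
    by (rule common_basis_if_exch_cycle[OF no_order_two assms(2-5) C(1)])
  then show "\<exists>B. B \<in> M1 \<and> B \<in> M2 \<and> (\<Sum>x\<in>B. \<psi> x) \<noteq> 0" using assms(6) by simp
qed

end
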